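(* Let $d \geq 1$ be a fixed integer, let $p_n \in \mathbb{N}$ with $p_n > d$, and let $W_n \sim \mathcal{W}_{p_n}(I_{p_n}/n, n)$, partitioned as $$W_n = \begin{pmatrix} W_{n,11} & W_{n,12} \\ W_{n,21} & W_{n,22} \end{pmatrix},$$ where $W_{n,11}$ has size $d \times d$. Then, as $n, p_n \to \infty$: (1) if $p_n/n \to 0$, then $\mathrm{tr}(W_{n,12}W_{n,21}) = \mathcal{O}_p(p_n/n)$; (2) if $p_n/n \to \infty$ and $p_n/(n\sqrt{\lambda_n}) \to 0$ for some sequence $\lambda_n \to \infty$, then $\mathrm{tr}(W_{n,12}W_{n,21}) = o_p(\sqrt{\lambda_n})$.
   Context: $\mathcal{W}_p(\Sigma, \nu)$ denotes the $p \times p$ Wishart distribution with scale matrix $\Sigma$ and $\nu$ degrees of freedom; thus $W_n$ is distributed as $\frac{1}{n}\sum_{i=1}^n z_i z_i'$ for i.i.d. $z_i \sim \mathcal{N}_{p_n}(0, I_{p_n})$. $\mathcal{O}_p$ and $o_p$ denote stochastic boundedness and convergence to zero in probability (relative to the indicated rate). *)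

theory Defs
  imports "HOL-Probability.Probability"
begin

text \<open>Entry (a,b) of W_n = (1/n) sum_{i<n} z_i z_i', with z_i = (X n i 0, ..., X n i (p_n - 1)).\<close>
definition wishart_W :: "(nat \<Rightarrow> nat \<Rightarrow> nat \<Rightarrow> 'a \<Rightarrow> real) \<Rightarrow> nat \<Rightarrow> nat \<Rightarrow> nat \<Rightarrow> 'a \<Rightarrow> real" where
  "wishart_W X n a b \<omega> = (1 / real n) * (\<Sum>i<n. X n i a \<omega> * X n i b \<omega>)"

definition tr_W12_W21 :: "nat \<Rightarrow> (nat \<Rightarrow> nat) \<Rightarrow> (nat \<Rightarrow> nat \<Rightarrow> nat \<Rightarrow> 'a \<Rightarrow> real) \<Rightarrow> nat \<Rightarrow> 'a \<Rightarrow> real" where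
  "tr_W12_W21 d p X n \<omega> =
     (\<Sum>a<d. \<Sum>b\<in>{d..<p n}. wishart_W X n a b \<omega> * wishart_W X n b a \<omega>)"

definition bigO_p :: "'a measure \<Rightarrow> (nat \<Rightarrow> 'a \<Rightarrow> real) \<Rightarrow> (nat \<Rightarrow> real) \<Rightarrow> bool" where
  "bigO_p M Y r \<longleftrightarrow> (\<forall>\<epsilon>>0. \<exists>C. \<exists>N. \<forall>n\<ge>N.
      measure M {\<omega>\<in>space M. \<bar>Y n \<omega>\<bar> > C * r n} < \<epsilon>)"

definition smallo_p :: "'a measure \<Rightarrow> (nat \<Rightarrow> 'a \<Rightarrow> real) \<Rightarrow> (nat \<Rightarrow> real) \<Rightarrow> bool" where
  "smallo_p M Y r \<longleftrightarrow> (\<forall>\<epsilon>>0.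
      ((\<lambda>n. measure M {\<omega>\<in>space M. \<bar>Y n \<omega>\<bar> > \<epsilon> * r n}) \<longlongrightarrow> 0) sequentially)"

end

theory Submission imports Defs begin

text \<open>Since \<open>W\<^sub>n\<close> is symmetric, \<open>tr(W\<^sub>n\<^sub>,\<^sub>1\<^sub>2 W\<^sub>n\<^sub>,\<^sub>2\<^sub>1)\<close> is the sum of the squares of
the \<open>d(p\<^sub>n - d)\<close> entries of \<open>W\<^sub>n\<^sub>,\<^sub>1\<^sub>2\<close>. An off-diagonal entry
\<open>W\<^sub>a\<^sub>b = n\<^sup>-\<^sup>1 \<Sum>\<^sub>i X\<^sub>i\<^sub>a X\<^sub>i\<^sub>b\<close> has second moment \<open>1/n\<close>: in the expansion of its square
only the \<open>n\<close> products \<open>X\<^sub>i\<^sub>a\<^sup>2 X\<^sub>i\<^sub>b\<^sup>2\<close> have nonzero mean, by independence and centring.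
So the trace is a nonnegative variable of mean \<open>d(p\<^sub>n - d)/n\<close>, and Markov's inequality gives
\<open>P(tr > c) \<le> d p\<^sub>n/(n c)\<close>. Taking \<open>c = C p\<^sub>n/n\<close> gives (1), and \<open>c = \<epsilon> sqrt \<lambda>\<^sub>n\<close> gives (2).\<close>

lemma (in prob_space) std_normal_integrable_power:
  assumes "distributed M lborel Y std_normal_density"
  shows "integrable M (\<lambda>\<omega>. Y \<omega> ^ m)"
  using distributed_integrable[OF assms, of "\<lambda>x. x ^ m"] integrable_std_normal_moment[of m]
  by simp

lemma (in prob_space) std_normal_second_moment:
  assumes "distributed M lborel Y std_normal_density"
  shows "expectation (\<lambda>\<omega>. Y \<omega> ^ 2) = 1"
  using standard_normal_distributed_variance[OF assms]
    standard_normal_distributed_expectation[OF assms]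
  by simp

lemma (in prob_space) indep_vars_prod_power:
  fixes Z :: "'i \<Rightarrow> 'a \<Rightarrow> real"
  assumes indep: "indep_vars (\<lambda>_. borel) Z I" and J: "finite J" "J \<subseteq> I"
    and int: "\<And>k. k \<in> J \<Longrightarrow> integrable M (\<lambda>\<omega>. Z k \<omega> ^ g k)"
  shows "integrable M (\<lambda>\<omega>. \<Prod>k\<in>J. Z k \<omega> ^ g k)"
    and "expectation (\<lambda>\<omega>. \<Prod>k\<in>J. Z k \<omega> ^ g k) = (\<Prod>k\<in>J. expectation (\<lambda>\<omega>. Z k \<omega> ^ g k))"
proof -
  have "indep_vars (\<lambda>_. borel) (\<lambda>k \<omega>. Z k \<omega> ^ g k) I"
    using indep by (rule indep_vars_compose2) simp
  then have powers: "indep_vars (\<lambda>_. borel) (\<lambda>k \<omega>. Z k \<omega> ^ g k) J"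
    using J(2) by (rule indep_vars_subset)
  show "integrable M (\<lambda>\<omega>. \<Prod>k\<in>J. Z k \<omega> ^ g k)"
    using indep_vars_integrable[OF J(1) powers] int by blast
  show "expectation (\<lambda>\<omega>. \<Prod>k\<in>J. Z k \<omega> ^ g k) = (\<Prod>k\<in>J. expectation (\<lambda>\<omega>. Z k \<omega> ^ g k))"
    using indep_vars_lebesgue_integral[OF J(1) powers] int by blast
qed

lemma (in prob_space) indep_std_normal_cross_moment:
  fixes Z :: "'i \<times> 'j \<Rightarrow> 'a \<Rightarrow> real"
  assumes indep: "indep_vars (\<lambda>_. borel) Z I"
    and normal: "\<And>k. k \<in> I \<Longrightarrow> distributed M lborel (Z k) std_normal_density"
    and I: "{(i, a), (i, b), (j, a), (j, b)} \<subseteq> I" and "a \<noteq> b"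
  shows "integrable M (\<lambda>\<omega>. Z (i, a) \<omega> * Z (i, b) \<omega> * (Z (j, a) \<omega> * Z (j, b) \<omega>))"
    and "expectation (\<lambda>\<omega>. Z (i, a) \<omega> * Z (i, b) \<omega> * (Z (j, a) \<omega> * Z (j, b) \<omega>))
           = (if i = j then 1 else 0)"
proof -
  define J where "J = {(i, a), (i, b), (j, a), (j, b)}"
  \<comment> \<open>For \<open>i = j\<close> the four indices collapse to two, each occurring squared.\<close>
  define g :: "'i \<times> 'j \<Rightarrow> nat" where "g = (\<lambda>_. if i = j then 2 else 1)"
  have int: "integrable M (\<lambda>\<omega>. Z k \<omega> ^ g k)" if "k \<in> J" for k
    using std_normal_integrable_power normal I that unfolding J_def by blast
  have prod_eq: "Z (i, a) \<omega> * Z (i, b) \<omega> * (Z (j, a) \<omega> * Z (j, b) \<omega>) = (\<Prod>k\<in>J. Z k \<omega> ^ g k)"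
    for \<omega>
  proof (cases "i = j")
    case True
    then have "J = {(i, a), (i, b)}" by (auto simp: J_def)
    with True \<open>a \<noteq> b\<close> show ?thesis by (simp add: g_def power2_eq_square mult_ac)
  next
    case False
    with \<open>a \<noteq> b\<close> show ?thesis by (simp add: J_def g_def mult_ac)
  qed
  have moments: "(\<Prod>k\<in>J. expectation (\<lambda>\<omega>. Z k \<omega> ^ g k)) = (if i = j then 1 else 0)"
  proof (cases "i = j")
    case True
    then have "J = {(i, a), (i, b)}" by (auto simp: J_def)
    with True \<open>a \<noteq> b\<close> show ?thesis
      using std_normal_second_moment normal I by (simp add: g_def)
  next
    case False
    have "expectation (\<lambda>\<omega>. Z (i, a) \<omega> ^ g (i, a)) = 0"
      using standard_normal_distributed_expectation normal I False by (simp add: g_def)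
    then have "(\<Prod>k\<in>J. expectation (\<lambda>\<omega>. Z k \<omega> ^ g k)) = 0"
      by (intro prod_zero) (auto simp: J_def)
    with False show ?thesis by simp
  qed
  have "finite J" "J \<subseteq> I"
    using I by (auto simp: J_def)
  note prod = indep_vars_prod_power[OF indep \<open>finite J\<close> \<open>J \<subseteq> I\<close> int]
  show "integrable M (\<lambda>\<omega>. Z (i, a) \<omega> * Z (i, b) \<omega> * (Z (j, a) \<omega> * Z (j, b) \<omega>))"
    unfolding prod_eq by (rule prod(1))
  show "expectation (\<lambda>\<omega>. Z (i, a) \<omega> * Z (i, b) \<omega> * (Z (j, a) \<omega> * Z (j, b) \<omega>))
          = (if i = j then 1 else 0)"
    unfolding prod_eq using prod(2) moments by simp
qed

lemma integrable_integral_double_sum: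
  fixes f :: "'i \<Rightarrow> 'j \<Rightarrow> 'a \<Rightarrow> real"
  assumes "\<And>i j. i \<in> I \<Longrightarrow> j \<in> J i \<Longrightarrow> integrable M (f i j)"
  shows "integrable M (\<lambda>\<omega>. \<Sum>i\<in>I. \<Sum>j\<in>J i. f i j \<omega>)"
    and "(\<integral>\<omega>. (\<Sum>i\<in>I. \<Sum>j\<in>J i. f i j \<omega>) \<partial>M) = (\<Sum>i\<in>I. \<Sum>j\<in>J i. integral\<^sup>L M (f i j))"
proof -
  have inner: "integrable M (\<lambda>\<omega>. \<Sum>j\<in>J i. f i j \<omega>)" if "i \<in> I" for i
    using assms that by (intro Bochner_Integration.integrable_sum) auto
  then show "integrable M (\<lambda>\<omega>. \<Sum>i\<in>I. \<Sum>j\<in>J i. f i j \<omega>)"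
    by (rule Bochner_Integration.integrable_sum)
  have "(\<integral>\<omega>. (\<Sum>i\<in>I. \<Sum>j\<in>J i. f i j \<omega>) \<partial>M) = (\<Sum>i\<in>I. \<integral>\<omega>. (\<Sum>j\<in>J i. f i j \<omega>) \<partial>M)"
    using inner by (rule Bochner_Integration.integral_sum[where f="\<lambda>i \<omega>. \<Sum>j\<in>J i. f i j \<omega>"])
  also have "\<dots> = (\<Sum>i\<in>I. \<Sum>j\<in>J i. integral\<^sup>L M (f i j))"
    by (intro sum.cong refl Bochner_Integration.integral_sum assms)
  finally show "(\<integral>\<omega>. (\<Sum>i\<in>I. \<Sum>j\<in>J i. f i j \<omega>) \<partial>M) = (\<Sum>i\<in>I. \<Sum>j\<in>J i. integral\<^sup>L M (f i j))" .
qed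

lemma wishart_W_sym: "wishart_W X n b a = wishart_W X n a b"
  unfolding wishart_W_def by (simp add: mult.commute)

lemma (in prob_space) wishart_W_offdiag_second_moment:
  assumes indep: "indep_vars (\<lambda>_. borel) (\<lambda>(i, j). X n i j) ({..<n} \<times> {..<p})"
    and normal: "\<And>i j. i < n \<Longrightarrow> j < p \<Longrightarrow> distributed M lborel (X n i j) std_normal_density"
    and ab: "a < p" "b < p" "a \<noteq> b"
  shows "integrable M (\<lambda>\<omega>. (wishart_W X n a b \<omega>)\<^sup>2)"
    and "expectation (\<lambda>\<omega>. (wishart_W X n a b \<omega>)\<^sup>2) = 1 / real n"
proof -
  define Q where "Q i j = (\<lambda>\<omega>. X n i a \<omega> * X n i b \<omega> * (X n j a \<omega> * X n j b \<omega>))" for i j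
  have cross: "integrable M (Q i j)" "expectation (Q i j) = (if i = j then 1 else 0)"
    if "i < n" "j < n" for i j
    using indep_std_normal_cross_moment[OF indep, of i a b j] normal that ab
    by (auto simp: Q_def)
  have square: "(\<lambda>\<omega>. (wishart_W X n a b \<omega>)\<^sup>2) = (\<lambda>\<omega>. (1 / real n)\<^sup>2 * (\<Sum>i<n. \<Sum>j<n. Q i j \<omega>))"
    unfolding wishart_W_def Q_def by (simp add: power2_eq_square sum_product mult_ac)
  note sum = integrable_integral_double_sum[where I="{..<n}" and J="\<lambda>_. {..<n}" and f=Q and M=M]
  show "integrable M (\<lambda>\<omega>. (wishart_W X n a b \<omega>)\<^sup>2)"
    unfolding square using sum(1) cross(1) by simp
  have "expectation (\<lambda>\<omega>. \<Sum>i<n. \<Sum>j<n. Q i j \<omega>) = (\<Sum>i<n. \<Sum>j<n. expectation (Q i j))"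
    using sum(2) cross(1) by simp
  also have "\<dots> = real n"
    using cross(2) by simp
  finally show "expectation (\<lambda>\<omega>. (wishart_W X n a b \<omega>)\<^sup>2) = 1 / real n"
    unfolding square by (simp add: power2_eq_square)
qed

lemma tr_W12_W21_eq_sum_squares:
  "tr_W12_W21 d p X n \<omega> = (\<Sum>a<d. \<Sum>b\<in>{d..<p n}. (wishart_W X n a b \<omega>)\<^sup>2)"
  unfolding tr_W12_W21_def by (simp add: wishart_W_sym[of X n _ _] power2_eq_square)

lemma (in prob_space) tr_W12_W21_integrable_expectation:
  assumes indep: "indep_vars (\<lambda>_. borel) (\<lambda>(i, j). X n i j) ({..<n} \<times> {..<p n})"
    and normal: "\<And>i j. i < n \<Longrightarrow> j < p n \<Longrightarrow> distributed M lborel (X n i j) std_normal_density"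
  shows "integrable M (tr_W12_W21 d p X n)"
    and "expectation (tr_W12_W21 d p X n) = real d * real (p n - d) / real n"
proof -
  have entry: "integrable M (\<lambda>\<omega>. (wishart_W X n a b \<omega>)\<^sup>2)"
    "expectation (\<lambda>\<omega>. (wishart_W X n a b \<omega>)\<^sup>2) = 1 / real n"
    if "a < d" "b \<in> {d..<p n}" for a b
    using wishart_W_offdiag_second_moment[where X=X and n=n and p="p n", OF indep normal] that
    by auto
  have tr: "tr_W12_W21 d p X n = (\<lambda>\<omega>. \<Sum>a<d. \<Sum>b\<in>{d..<p n}. (wishart_W X n a b \<omega>)\<^sup>2)"
    by (simp add: fun_eq_iff tr_W12_W21_eq_sum_squares)
  note sum = integrable_integral_double_sum[where I="{..<d}" and J="\<lambda>_. {d..<p n}"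
      and f="\<lambda>a b \<omega>. (wishart_W X n a b \<omega>)\<^sup>2" and M=M]
  show "integrable M (tr_W12_W21 d p X n)"
    unfolding tr using sum(1) entry(1) by simp
  show "expectation (tr_W12_W21 d p X n) = real d * real (p n - d) / real n"
    unfolding tr using sum(2) entry by simp
qed

lemma (in prob_space) tr_W12_W21_tail_bound:
  assumes indep: "indep_vars (\<lambda>_. borel) (\<lambda>(i, j). X n i j) ({..<n} \<times> {..<p n})"
    and normal: "\<And>i j. i < n \<Longrightarrow> j < p n \<Longrightarrow> distributed M lborel (X n i j) std_normal_density"
    and "c > 0"
  shows "prob {\<omega>\<in>space M. \<bar>tr_W12_W21 d p X n \<omega>\<bar> > c} \<le> real d * (real (p n) / real n) / c"
proof -
  note tr = tr_W12_W21_integrable_expectation[where X=X and n=n and p=p and d=d, OF indep normal]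
  have nonneg: "tr_W12_W21 d p X n \<omega> \<ge> 0" for \<omega>
    unfolding tr_W12_W21_eq_sum_squares by (simp add: sum_nonneg)
  have "prob {\<omega>\<in>space M. \<bar>tr_W12_W21 d p X n \<omega>\<bar> > c} \<le> prob {\<omega>\<in>space M. tr_W12_W21 d p X n \<omega> \<ge> c}"
    using nonneg borel_measurable_integrable[OF tr(1)] by (intro finite_measure_mono) auto
  also have "\<dots> \<le> expectation (tr_W12_W21 d p X n) / c"
    using tr(1) nonneg \<open>c > 0\<close> by (intro integral_Markov_inequality_measure[where A="space M"]) auto
  also have "\<dots> = real d * (real (p n - d) / real n) / c"
    using tr(2) by simp
  also have "\<dots> \<le> real d * (real (p n) / real n) / c"
    using \<open>c > 0\<close> by (intro divide_right_mono mult_left_mono) auto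
  finally show ?thesis .
qed

lemma bigO_p_if_tail_bound:
  assumes tail: "\<And>n c. c > 0 \<Longrightarrow> measure M {\<omega>\<in>space M. \<bar>Y n \<omega>\<bar> > c} \<le> K * r n / c"
    and pos: "eventually (\<lambda>n. r n > 0) sequentially"
  shows "bigO_p M Y r"
  unfolding bigO_p_def
proof (intro allI impI)
  fix \<epsilon> :: real assume "\<epsilon> > 0"
  define C where "C = (\<bar>K\<bar> + 1) / \<epsilon>"
  have "C > 0" "K < \<epsilon> * C"
    using \<open>\<epsilon> > 0\<close> by (simp_all add: C_def add_pos_nonneg)
  obtain N where N: "\<And>n. n \<ge> N \<Longrightarrow> r n > 0"
    using pos by (auto simp: eventually_sequentially)
  have "measure M {\<omega>\<in>space M. \<bar>Y n \<omega>\<bar> > C * r n} < \<epsilon>" if "n \<ge> N" for n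
  proof -
    have "measure M {\<omega>\<in>space M. \<bar>Y n \<omega>\<bar> > C * r n} \<le> K * r n / (C * r n)"
      using tail[of "C * r n" n] \<open>C > 0\<close> N[OF that] by simp
    also have "\<dots> < \<epsilon>"
      using \<open>C > 0\<close> \<open>K < \<epsilon> * C\<close> N[OF that] by (simp add: divide_less_eq)
    finally show ?thesis .
  qed
  then show "\<exists>C N. \<forall>n\<ge>N. measure M {\<omega>\<in>space M. \<bar>Y n \<omega>\<bar> > C * r n} < \<epsilon>"
    by blast
qed

lemma smallo_p_if_tail_bound:
  assumes tail: "\<And>n c. c > 0 \<Longrightarrow> measure M {\<omega>\<in>space M. \<bar>Y n \<omega>\<bar> > c} \<le> K * s n / c"
    and pos: "eventually (\<lambda>n. r n > 0) sequentially"
    and ratio: "(\<lambda>n. s n / r n) \<longlonglongrightarrow> 0"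
  shows "smallo_p M Y r"
  unfolding smallo_p_def
proof (intro allI impI)
  fix \<epsilon> :: real assume "\<epsilon> > 0"
  have bound: "eventually (\<lambda>n. measure M {\<omega>\<in>space M. \<bar>Y n \<omega>\<bar> > \<epsilon> * r n} \<le> K / \<epsilon> * (s n / r n))
      sequentially"
    using pos by eventually_elim (use tail \<open>\<epsilon> > 0\<close> in simp)
  have lim: "(\<lambda>n. K / \<epsilon> * (s n / r n)) \<longlonglongrightarrow> 0"
    by (rule tendsto_mult_right_zero[OF ratio])
  show "(\<lambda>n. measure M {\<omega>\<in>space M. \<bar>Y n \<omega>\<bar> > \<epsilon> * r n}) \<longlonglongrightarrow> 0"
    by (rule tendsto_sandwich[OF _ bound tendsto_const lim]) simp
qed

theorem lemma1:
  fixes M :: "'a measure" and d :: nat and p :: "nat \<Rightarrow> nat"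
    and X :: "nat \<Rightarrow> nat \<Rightarrow> nat \<Rightarrow> 'a \<Rightarrow> real"
  assumes "prob_space M"
    and "d \<ge> 1"
    and "\<And>n. p n > d"
    and "filterlim p at_top sequentially"
    and "\<And>n. prob_space.indep_vars M (\<lambda>_. borel) (\<lambda>(i, j). X n i j) ({..<n} \<times> {..<p n})"
    and "\<And>n i j. i < n \<Longrightarrow> j < p n \<Longrightarrow> distributed M lborel (X n i j) std_normal_density"
  shows "(((\<lambda>n. real (p n) / real n) \<longlonglongrightarrow> 0) \<longrightarrow>
            bigO_p M (tr_W12_W21 d p X) (\<lambda>n. real (p n) / real n))
       \<and> (\<forall>lam :: nat \<Rightarrow> real.
            filterlim (\<lambda>n. real (p n) / real n) at_top sequentially \<and>
            filterlim lam at_top sequentially \<and>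
            ((\<lambda>n. real (p n) / (real n * sqrt (lam n))) \<longlonglongrightarrow> 0) \<longrightarrow>
            smallo_p M (tr_W12_W21 d p X) (\<lambda>n. sqrt (lam n)))"
proof -
  interpret prob_space M by fact
  have tail: "prob {\<omega>\<in>space M. \<bar>tr_W12_W21 d p X n \<omega>\<bar> > c} \<le> real d * (real (p n) / real n) / c"
    if "c > 0" for n c
    using tr_W12_W21_tail_bound[where X=X and n=n and p=p, OF assms(5,6) that] .
  have p_pos: "p n > 0" for n
    using assms(3)[of n] by linarith
  have "eventually (\<lambda>n. real (p n) / real n > 0) sequentially"
    using eventually_gt_at_top[of 0] by eventually_elim (simp add: p_pos)
  with tail have part1: "bigO_p M (tr_W12_W21 d p X) (\<lambda>n. real (p n) / real n)"
    by (rule bigO_p_if_tail_bound)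
  have part2: "smallo_p M (tr_W12_W21 d p X) (\<lambda>n. sqrt (lam n))"
    if "filterlim lam at_top sequentially"
      and "(\<lambda>n. real (p n) / (real n * sqrt (lam n))) \<longlonglongrightarrow> 0" for lam :: "nat \<Rightarrow> real"
  proof (rule smallo_p_if_tail_bound[where K="real d", OF tail])
    show "eventually (\<lambda>n. sqrt (lam n) > 0) sequentially"
      using that(1) by (simp add: filterlim_at_top_dense)
    show "(\<lambda>n. real (p n) / real n / sqrt (lam n)) \<longlonglongrightarrow> 0"
      using that(2) by simp
  qed
  show ?thesis
    using part1 part2 by blast
qed

end
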